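(* Let $Z\subset\mathbb{R}^d$ be a zonotope and let $Z_1=\lambda_1Z+x_1$ and $Z_2=\lambda_2Z+x_2$ ($\lambda_1,\lambda_2>0$) be homothets of $Z$ with $Z_1\cap Z_2\neq\emptyset$ and $\lambda_1\ge\lambda_2$. Then $Z_1$ contains at least one vertex of $Z_2$.
   Context: A zonotope is a centrally symmetric convex polytope all of whose faces are centrally symmetric. *)

theory Defs
  imports "HOL-Analysis.Analysis"
begin

definition centrally_symmetric :: "'a::real_vector set \<Rightarrow> bool" where
  "centrally_symmetric S \<longleftrightarrow> (\<exists>c. \<forall>x\<in>S. 2 *\<^sub>R c - x \<in> S)"

definition zonotope :: "'a::euclidean_space set \<Rightarrow> bool" where
  "zonotope Z \<longleftrightarrow> polytope Z \<and> centrally_symmetric Z \<and>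
     (\<forall>F. F face_of Z \<longrightarrow> centrally_symmetric F)"

definition homothet :: "real \<Rightarrow> 'a::real_vector \<Rightarrow> 'a set \<Rightarrow> 'a set" where
  "homothet l x Z = (\<lambda>z. l *\<^sub>R z + x) ` Z"

end

theory Submission
  imports Defs
begin

text \<open>Every point w of a polytope whose faces are all centrally symmetric is the midpoint
  of a vertex v and a point 2w - v of the polytope. If w is the centre c, any vertex works.
  Otherwise the ray from c through w leaves the polytope at a point b of a proper face;
  by induction on the dimension b is the midpoint of a vertex v and a point of that face,
  and since the reflection of v through c also lies in the polytope, convexity gives the
  same for every point of the segment from c to b, in particular for w.

  For homothets l1 Z + x1 and l2 Z + x2 meeting in a common point, apply this
  to a suitable convex combination w of the two preimages of that point (one of them
  reflected through c); the vertex v so obtained is mapped into the first homothet, the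
  factor l2 / l1 \<le> 1 being absorbed by convexity.\<close>

lemma extreme_point_of_homothet:
  fixes Z :: "'a::real_vector set"
  assumes "l \<noteq> 0" and "v extreme_point_of Z"
  shows "(l *\<^sub>R v + x) extreme_point_of homothet l x Z"
proof -
  have "linear ((*\<^sub>R) l :: 'a \<Rightarrow> 'a)" "inj ((*\<^sub>R) l :: 'a \<Rightarrow> 'a)"
    using assms(1) by (auto simp: inj_on_def)
  then have "(l *\<^sub>R v) extreme_point_of ((*\<^sub>R) l ` Z)"
    using assms(2) face_of_linear_image[of "(*\<^sub>R) l" "{v}" Z] by (simp add: face_of_singleton)
  then show ?thesis
    using extreme_point_of_translation_eq[of x "l *\<^sub>R v" "(*\<^sub>R) l ` Z"]
    by (simp add: homothet_def image_image add.commute)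
qed

lemma segment_through_to_rel_frontier:
  fixes S :: "'a::euclidean_space set"
  assumes "bounded S" and "c \<in> S" and "w \<in> S" and "w \<noteq> c"
  obtains b where "b \<in> rel_frontier S" and "w \<in> closed_segment c b"
proof (cases "w \<in> rel_frontier S")
  case True
  then show ?thesis using that by auto
next
  case False
  then have "w \<in> rel_interior S"
    using assms(3) closure_subset unfolding rel_frontier_def by blast
  moreover have "w + (w - c) \<in> affine hull S"
  proof -
    have "2 *\<^sub>R w + (-1) *\<^sub>R c \<in> affine hull S"
      by (rule mem_affine[OF affine_affine_hull]) (use assms(2,3) hull_inc in auto)
    then show ?thesis by (simp add: algebra_simps scaleR_2)
  qed
  ultimately obtain d where d: "0 < d" "w + d *\<^sub>R (w - c) \<in> rel_frontier S"
    using ray_to_rel_frontier[OF assms(1)] assms(4) by (metis right_minus_eq)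
  have "w + d *\<^sub>R (w - c) - c = (1 + d) *\<^sub>R (w - c)"
    by (simp add: algebra_simps)
  then have "w - c = (1 / (1 + d)) *\<^sub>R (w + d *\<^sub>R (w - c) - c)"
    using d(1) by simp
  then have "w = (1 - 1 / (1 + d)) *\<^sub>R c + (1 / (1 + d)) *\<^sub>R (w + d *\<^sub>R (w - c))"
    by (simp add: algebra_simps)
  then have "w \<in> closed_segment c (w + d *\<^sub>R (w - c))"
    using d(1) unfolding in_segment by (intro exI[of _ "1 / (1 + d)"]) auto
  then show ?thesis using that d(2) by blast
qed

lemma reflection_through_segment_in_convex:
  assumes "convex S" and "2 *\<^sub>R c - v \<in> S" and "2 *\<^sub>R b - v \<in> S"
    and "w \<in> closed_segment c b"
  shows "2 *\<^sub>R w - v \<in> S"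
proof -
  obtain u where u: "0 \<le> u" "u \<le> 1" "w = (1 - u) *\<^sub>R c + u *\<^sub>R b"
    using assms(4) by (auto simp: in_segment)
  have "(1 - u) *\<^sub>R (2 *\<^sub>R c - v) + u *\<^sub>R (2 *\<^sub>R b - v) \<in> S"
    using convexD[OF assms(1-3)] u(1,2) by simp
  moreover have "(1 - u) *\<^sub>R (2 *\<^sub>R c - v) + u *\<^sub>R (2 *\<^sub>R b - v) = 2 *\<^sub>R w - v"
    by (simp add: u(3) algebra_simps)
  ultimately show ?thesis by simp
qed

lemma extreme_point_reflection_exists:
  fixes S :: "'a::euclidean_space set"
  assumes "polytope S" and "\<And>F. F face_of S \<Longrightarrow> centrally_symmetric F" and "w \<in> S"
  shows "\<exists>v. v extreme_point_of S \<and> 2 *\<^sub>R w - v \<in> S"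
  using assms
proof (induction "nat (aff_dim S + 1)" arbitrary: S w rule: less_induct)
  case less
  have "convex S" "compact S"
    using less.prems(1) by (simp_all add: polytope_imp_convex polytope_imp_compact)
  have frontier: "\<exists>v. v extreme_point_of S \<and> 2 *\<^sub>R b - v \<in> S" if b: "b \<in> rel_frontier S" for b
  proof -
    obtain F where F: "F face_of S" "F \<noteq> S" "b \<in> F"
      using b rel_frontier_of_polyhedron_alt[OF polytope_imp_polyhedron[OF less.prems(1)]] by auto
    have "nat (aff_dim F + 1) < nat (aff_dim S + 1)"
      using face_of_aff_dim_lt[OF \<open>convex S\<close> F(1,2)] aff_dim_geq[of F] by linarith
    moreover have "polytope F"
      using face_of_polytope_polytope[OF less.prems(1) F(1)] .
    moreover have "\<And>G. G face_of F \<Longrightarrow> centrally_symmetric G"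
      using less.prems(2) F(1) face_of_trans by blast
    ultimately obtain v where "v extreme_point_of F" "2 *\<^sub>R b - v \<in> F"
      using less.hyps F(3) by blast
    then show ?thesis
      using extreme_point_of_face[OF F(1)] face_of_imp_subset[OF F(1)] by blast
  qed
  obtain c where c: "\<And>x. x \<in> S \<Longrightarrow> 2 *\<^sub>R c - x \<in> S"
    using less.prems(2)[OF face_of_refl[OF \<open>convex S\<close>]] unfolding centrally_symmetric_def by blast
  show ?case
  proof (cases "w = c")
    case True
    obtain v where "v extreme_point_of S"
      using extreme_point_exists_convex[OF \<open>compact S\<close> \<open>convex S\<close>] less.prems(3) by blast
    then show ?thesis
      using c True by (auto simp: extreme_point_of_def)
  next
    case False
    have "(1/2) *\<^sub>R w + (1/2) *\<^sub>R (2 *\<^sub>R c - w) \<in> S"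
      using convexD[OF \<open>convex S\<close> less.prems(3) c[OF less.prems(3)]] by simp
    then have "c \<in> S"
      by (simp add: algebra_simps)
    then obtain b where b: "b \<in> rel_frontier S" "w \<in> closed_segment c b"
      using segment_through_to_rel_frontier compact_imp_bounded \<open>compact S\<close> less.prems(3) False
      by metis
    obtain v where v: "v extreme_point_of S" "2 *\<^sub>R b - v \<in> S"
      using frontier[OF b(1)] by blast
    then have "2 *\<^sub>R c - v \<in> S"
      using c by (simp add: extreme_point_of_def)
    then show ?thesis
      using reflection_through_segment_in_convex[OF \<open>convex S\<close> _ v(2) b(2)] v(1) by blast
  qed
qed

lemma extreme_point_of_homothet_mem_larger_homothet:
  fixes Z :: "'a::real_vector set"
  assumes "convex Z" and symmetric: "\<And>x. x \<in> Z \<Longrightarrow> 2 *\<^sub>R c - x \<in> Z"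
    and reflection: "\<And>w. w \<in> Z \<Longrightarrow> \<exists>v. v extreme_point_of Z \<and> 2 *\<^sub>R w - v \<in> Z"
    and "0 < l2" and "l2 \<le> l1"
    and "homothet l1 x1 Z \<inter> homothet l2 x2 Z \<noteq> {}"
  shows "\<exists>v. v extreme_point_of (homothet l2 x2 Z) \<and> v \<in> homothet l1 x1 Z"
proof -
  obtain z1 z2 where z: "z1 \<in> Z" "z2 \<in> Z" "l1 *\<^sub>R z1 + x1 = l2 *\<^sub>R z2 + x2"
    using assms(6) by (auto simp: homothet_def)
  define w where "w = (l1 / (l1 + l2)) *\<^sub>R (2 *\<^sub>R c - z1) + (l2 / (l1 + l2)) *\<^sub>R z2"
  have "w \<in> Z"
    unfolding w_def using assms(4,5) convexD[OF assms(1) symmetric[OF z(1)] z(2)]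
    by (simp add: add_divide_distrib[symmetric])
  then obtain v where v: "v extreme_point_of Z" "2 *\<^sub>R w - v \<in> Z"
    using reflection by blast
  \<comment> \<open>u = (l2 v + x2 - x1) / l1, written as a convex combination of reflections of w and 2w - v\<close>
  define u where "u = (1 - l2 / l1) *\<^sub>R (2 *\<^sub>R c - w) + (l2 / l1) *\<^sub>R (2 *\<^sub>R c - (2 *\<^sub>R w - v))"
  have "u \<in> Z"
    unfolding u_def using assms(4,5) convexD[OF assms(1) symmetric[OF \<open>w \<in> Z\<close>] symmetric[OF v(2)]]
    by simp
  have w_eq: "(l1 + l2) *\<^sub>R w = l1 *\<^sub>R (2 *\<^sub>R c - z1) + l2 *\<^sub>R z2"
    using assms(4,5) by (simp add: w_def scaleR_add_right)
  have "l1 *\<^sub>R u = (l1 - l2) *\<^sub>R (2 *\<^sub>R c - w) + l2 *\<^sub>R (2 *\<^sub>R c - (2 *\<^sub>R w - v))"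
    using assms(4,5) by (simp add: u_def scaleR_add_right scaleR_diff_right scaleR_diff_left)
  also have "\<dots> = l1 *\<^sub>R (2 *\<^sub>R c) - (l1 + l2) *\<^sub>R w + l2 *\<^sub>R v"
    by (simp add: algebra_simps scaleR_2)
  also have "\<dots> = l1 *\<^sub>R z1 - l2 *\<^sub>R z2 + l2 *\<^sub>R v"
    unfolding w_eq by (simp add: algebra_simps)
  finally have u_eq: "l1 *\<^sub>R u = l1 *\<^sub>R z1 - l2 *\<^sub>R z2 + l2 *\<^sub>R v" .
  have x2_eq: "x2 = l1 *\<^sub>R z1 + x1 - l2 *\<^sub>R z2"
    using z(3) by (simp add: algebra_simps)
  have "l1 *\<^sub>R u + x1 = l2 *\<^sub>R v + x2"
    unfolding u_eq x2_eq by (simp add: algebra_simps)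
  then show ?thesis
    using extreme_point_of_homothet[of l2 v Z x2] v(1) assms(4) \<open>u \<in> Z\<close>
    by (force simp: homothet_def)
qed

theorem mainTheorem19:
  fixes Z :: "'a::euclidean_space set" and x1 x2 :: 'a and l1 l2 :: real
  assumes "zonotope Z"
    and "l1 > 0" and "l2 > 0"
    and "homothet l1 x1 Z \<inter> homothet l2 x2 Z \<noteq> {}"
    and "l1 \<ge> l2"
  shows "\<exists>v. v extreme_point_of (homothet l2 x2 Z) \<and> v \<in> homothet l1 x1 Z"
proof -
  have "polytope Z" and "\<And>F. F face_of Z \<Longrightarrow> centrally_symmetric F"
    using assms(1) by (auto simp: zonotope_def)
  moreover obtain c where "\<And>x. x \<in> Z \<Longrightarrow> 2 *\<^sub>R c - x \<in> Z"
    using assms(1) by (auto simp: zonotope_def centrally_symmetric_def)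
  ultimately show ?thesis
    using extreme_point_of_homothet_mem_larger_homothet[of Z c l2 l1 x1 x2]
      extreme_point_reflection_exists polytope_imp_convex assms(3-5) by blast
qed

end
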